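(* For any term $t$, scalar $\alpha$, type $T$ and context $\Gamma$ of the Scalar type system: if $\Gamma\vdash\alpha.t:T$ then there exist a unit type $U$ and a scalar $\gamma\in\mathcal S$ such that $T\equiv\alpha.\gamma.U$.
   Context: Fix a commutative ring $(\mathcal{S},+,\times)$. Terms: $t,r ::= b \mid (t)\,r \mid \mathbf{0} \mid \alpha.t \mid t+r$, basis terms $b ::= x \mid \lambda x\,t$, modulo associativity and commutativity of $+$. Types: $T ::= U \mid \forall X.T \mid \alpha.T \mid \overline{0}$; unit types: $U ::= X \mid U\to T \mid \forall X.U$. Type variables are only substituted by unit types; $(\alpha.T)[U/X]=\alpha.T[U/X]$. Type equivalence $\equiv$ is the least congruence with $\alpha.\overline0\equiv\overline0$, $0.T\equiv\overline0$, $1.T\equiv T$, $\alpha.(\beta.T)\equiv(\alpha\times\beta).T$, $\forall X.\alpha.T\equiv\alpha.\forall X.T$. A context is a set of distinct term variables with unit types. Typing rules: (ax) $\Gamma,x:U\vdash x:U$; ($\equiv$) from $\Gamma\vdash t:T$ and $T\equiv S$ infer $\Gamma\vdash t:S$; ($\to_E$) from $\Gamma\vdash t:\alpha.(U\to T)$ and $\Gamma\vdash r:\beta.U$ infer $\Gamma\vdash (t)\,r:(\alpha\times\beta).T$; ($\to_I$) from $\Gamma,x:U\vdash t:T$ infer $\Gamma\vdash\lambda x\,t:U\to T$; ($\forall_E$) from $\Gamma\vdash t:\forall X.T$ infer $\Gamma\vdash t:T[U/X]$, $U$ unit; ($\forall_I$) from $\Gamma\vdash t:T$ with $X$ not free in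 $\Gamma$ infer $\Gamma\vdash t:\forall X.T$; ($ax_{\overline0}$) $\Gamma\vdash\mathbf 0:\overline0$; ($+_I$) from $\Gamma\vdash t:\alpha.T$ and $\Gamma\vdash r:\beta.T$ infer $\Gamma\vdash t+r:(\alpha+\beta).T$; ($s_I$) from $\Gamma\vdash t:T$ infer $\Gamma\vdash\alpha.t:\alpha.T$. *)

theory Defs
  imports Main
begin

datatype 's trm =
    Var nat
  | Lam "'s trm"
  | App "'s trm" "'s trm"
  | TmZero
  | Scal 's "'s trm"
  | Plus "'s trm" "'s trm"

inductive tac :: "'s trm \<Rightarrow> 's trm \<Rightarrow> bool" where
  tac_refl: "tac t t"
| tac_sym: "tac t r \<Longrightarrow> tac r t"
| tac_trans: "tac t r \<Longrightarrow> tac r s \<Longrightarrow> tac t s"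
| tac_comm: "tac (Plus t r) (Plus r t)"
| tac_assoc: "tac (Plus (Plus t r) s) (Plus t (Plus r s))"
| tac_Lam: "tac t t' \<Longrightarrow> tac (Lam t) (Lam t')"
| tac_App: "tac t t' \<Longrightarrow> tac r r' \<Longrightarrow> tac (App t r) (App t' r')"
| tac_Scal: "tac t t' \<Longrightarrow> tac (Scal a t) (Scal a t')"
| tac_Plus: "tac t t' \<Longrightarrow> tac r r' \<Longrightarrow> tac (Plus t r) (Plus t' r')"

text \<open>Types, with de Bruijn indices for type variables (TAll binds index 0).\<close>
datatype 's sty =
    TVar nat
  | Arr "'s sty" "'s sty"
  | TAll "'s sty"
  | TSc 's "'s sty"
  | TZero

fun is_unit :: "'s sty \<Rightarrow> bool" and wf_typ :: "'s sty \<Rightarrow> bool" where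
  "is_unit (TVar n) = True"
| "is_unit (Arr A B) = (is_unit A \<and> wf_typ B)"
| "is_unit (TAll A) = is_unit A"
| "is_unit (TSc a A) = False"
| "is_unit TZero = False"
| "wf_typ (TVar n) = True"
| "wf_typ (Arr A B) = (is_unit A \<and> wf_typ B)"
| "wf_typ (TAll A) = wf_typ A"
| "wf_typ (TSc a A) = wf_typ A"
| "wf_typ TZero = True"

fun lift :: "nat \<Rightarrow> 's sty \<Rightarrow> 's sty" where
  "lift k (TVar i) = (if i < k then TVar i else TVar (Suc i))"
| "lift k (Arr A B) = Arr (lift k A) (lift k B)"
| "lift k (TAll A) = TAll (lift (Suc k) A)"
| "lift k (TSc a A) = TSc a (lift k A)"
| "lift k TZero = TZero"

text \<open>subst k U T = T[U/k] (capture-avoiding, de Bruijn).\<close>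
fun subst :: "nat \<Rightarrow> 's sty \<Rightarrow> 's sty \<Rightarrow> 's sty" where
  "subst k U (TVar i) = (if i < k then TVar i else if i = k then U else TVar (i - 1))"
| "subst k U (Arr A B) = Arr (subst k U A) (subst k U B)"
| "subst k U (TAll A) = TAll (subst (Suc k) (lift 0 U) A)"
| "subst k U (TSc a A) = TSc a (subst k U A)"
| "subst k U TZero = TZero"

inductive teq :: "'s::comm_ring_1 sty \<Rightarrow> 's sty \<Rightarrow> bool" where
  teq_refl: "wf_typ T \<Longrightarrow> teq T T"
| teq_sym: "teq T S \<Longrightarrow> teq S T"
| teq_trans: "teq T S \<Longrightarrow> teq S R \<Longrightarrow> teq T R"
| teq_sc_zero: "teq (TSc a TZero) TZero"
| teq_zero_sc: "wf_typ T \<Longrightarrow> teq (TSc 0 T) TZero"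
| teq_one: "wf_typ T \<Longrightarrow> teq (TSc 1 T) T"
| teq_sc_sc: "wf_typ T \<Longrightarrow> teq (TSc a (TSc b T)) (TSc (a * b) T)"
| teq_all_sc: "wf_typ T \<Longrightarrow> teq (TAll (TSc a T)) (TSc a (TAll T))"
| teq_Arr: "teq A A' \<Longrightarrow> is_unit A \<Longrightarrow> is_unit A' \<Longrightarrow> teq B B' \<Longrightarrow> teq (Arr A B) (Arr A' B')"
| teq_All: "teq A A' \<Longrightarrow> teq (TAll A) (TAll A')"
| teq_Sc: "teq A A' \<Longrightarrow> teq (TSc a A) (TSc a A')"

text \<open>Typing judgement; contexts are lists of unit types indexed by de Bruijn indices.\<close>
inductive typing :: "'s::comm_ring_1 sty list \<Rightarrow> 's trm \<Rightarrow> 's sty \<Rightarrow> bool" where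
  ty_ax: "i < length \<Gamma> \<Longrightarrow> typing \<Gamma> (Var i) (\<Gamma> ! i)"
| ty_equiv: "typing \<Gamma> t T \<Longrightarrow> teq T S \<Longrightarrow> typing \<Gamma> t S"
| ty_arrE: "typing \<Gamma> t (TSc a (Arr U T)) \<Longrightarrow> typing \<Gamma> r (TSc b U)
            \<Longrightarrow> typing \<Gamma> (App t r) (TSc (a * b) T)"
| ty_arrI: "is_unit U \<Longrightarrow> typing (U # \<Gamma>) t T \<Longrightarrow> typing \<Gamma> (Lam t) (Arr U T)"
| ty_allE: "typing \<Gamma> t (TAll T) \<Longrightarrow> is_unit U \<Longrightarrow> typing \<Gamma> t (subst 0 U T)"
| ty_allI: "typing (map (lift 0) \<Gamma>) t T \<Longrightarrow> typing \<Gamma> t (TAll T)"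
| ty_zero: "typing \<Gamma> TmZero TZero"
| ty_plusI: "typing \<Gamma> t (TSc a T) \<Longrightarrow> typing \<Gamma> r (TSc b T)
            \<Longrightarrow> typing \<Gamma> (Plus t r) (TSc (a + b) T)"
| ty_sI: "typing \<Gamma> t T \<Longrightarrow> typing \<Gamma> (Scal a t) (TSc a T)"
| ty_ac: "typing \<Gamma> t T \<Longrightarrow> tac t t' \<Longrightarrow> typing \<Gamma> t' T"

end

theory Submission
  imports Defs
begin

text \<open>Induction on the typing derivation, generalised to all terms that are AC-equivalent
  to \<open>\<alpha>.t\<close>. Every rule preserves the shape \<open>T \<equiv> \<alpha>.\<gamma>.U\<close> directly except \<open>\<forall>\<close>-elimination:
  from \<open>\<forall>X.T \<equiv> \<alpha>.\<delta>.U'\<close> one must recover the scalar \<open>\<alpha>\<close> inside \<open>T\<close>. For this, types are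
  mapped to canonical forms \<open>0\<close> or \<open>c.u\<close> (\<open>c \<noteq> 0\<close>, \<open>u\<close> a canonical unit) that are invariant
  under \<open>\<equiv>\<close>. Hence \<open>\<gamma>.U \<equiv> \<delta>.U'\<close> for unit types forces \<open>\<gamma> = \<delta>\<close> unless both are \<open>0\<close>, so
  writing \<open>T \<equiv> \<gamma>.U\<close> gives \<open>\<gamma> = \<alpha>\<delta>\<close> or \<open>\<gamma> = 0\<close>, and in both cases \<open>T \<equiv> \<alpha>.\<gamma>'.U\<close>.\<close>

lemma is_unit_imp_wf_typ: "is_unit T \<Longrightarrow> wf_typ T"
  by (induction T) auto

lemma is_unit_wf_typ_lift: "(is_unit (lift k T) \<longleftrightarrow> is_unit T) \<and> (wf_typ (lift k T) \<longleftrightarrow> wf_typ T)"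
  by (induction T arbitrary: k) auto

lemmas is_unit_lift [simp] = is_unit_wf_typ_lift[THEN conjunct1]
lemmas wf_typ_lift [simp] = is_unit_wf_typ_lift[THEN conjunct2]

lemma subst_preserves_unit_wf:
  "is_unit V \<Longrightarrow> (is_unit T \<longrightarrow> is_unit (subst k V T)) \<and> (wf_typ T \<longrightarrow> wf_typ (subst k V T))"
  by (induction T arbitrary: k V) (auto simp: is_unit_imp_wf_typ)

declare teq_trans [trans]

lemma teq_imp_wf_typ: "teq A B \<Longrightarrow> wf_typ A \<and> wf_typ B"
  by (induction rule: teq.induct) (auto simp: is_unit_imp_wf_typ)

lemma teq_subst: "teq A B \<Longrightarrow> is_unit V \<Longrightarrow> teq (subst k V A) (subst k V B)"
proof (induction arbitrary: k V rule: teq.induct)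
  case (teq_refl T)
  then show ?case using subst_preserves_unit_wf by (metis teq.teq_refl)
next
  case (teq_sym T S)
  then show ?case by (metis teq.teq_sym)
next
  case (teq_trans T S R)
  then show ?case by (metis teq.teq_trans)
next
  case (teq_sc_zero a)
  then show ?case by (simp add: teq.teq_sc_zero)
next
  case (teq_zero_sc T)
  then have "wf_typ (subst k V T)" using subst_preserves_unit_wf by blast
  then show ?case by (simp add: teq.teq_zero_sc)
next
  case (teq_one T)
  then have "wf_typ (subst k V T)" using subst_preserves_unit_wf by blast
  then show ?case by (simp add: teq.teq_one)
next
  case (teq_sc_sc T a b)
  then have "wf_typ (subst k V T)" using subst_preserves_unit_wf by blast
  then show ?case by (simp add: teq.teq_sc_sc)
next
  case (teq_all_sc T a)
  then have "wf_typ (subst (Suc k) (lift 0 V) T)" using subst_preserves_unit_wf is_unit_lift by blast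
  then show ?case by (simp add: teq.teq_all_sc)
next
  case (teq_Arr A A' B B')
  then have "is_unit (subst k V A)" "is_unit (subst k V A')" using subst_preserves_unit_wf by blast+
  then show ?case using teq_Arr by (simp add: teq.teq_Arr)
next
  case (teq_All A A')
  then show ?case by (simp add: teq.teq_All)
next
  case (teq_Sc A A' a)
  then show ?case by (simp add: teq.teq_Sc)
qed

lemma typing_imp_wf_typ: "typing \<Gamma> t T \<Longrightarrow> \<forall>V\<in>set \<Gamma>. is_unit V \<Longrightarrow> wf_typ T"
proof (induction rule: typing.induct)
  case (ty_ax i \<Gamma>)
  then show ?case using is_unit_imp_wf_typ nth_mem by blast
next
  case (ty_equiv \<Gamma> t T S)
  then show ?case using teq_imp_wf_typ by blast
next
  case (ty_allE \<Gamma> t T U)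
  then show ?case using subst_preserves_unit_wf by auto
qed auto

lemma wf_typ_teq_TSc_unit:
  "wf_typ (T::'s::comm_ring_1 sty) \<Longrightarrow> \<exists>\<gamma> U. is_unit U \<and> teq T (TSc \<gamma> U)"
proof (induction T)
  case (TVar n)
  then show ?case by (intro exI[of _ 1] exI[of _ "TVar n"]) (auto intro!: teq_sym[OF teq_one])
next
  case (Arr A B)
  then show ?case by (intro exI[of _ 1] exI[of _ "Arr A B"]) (auto intro!: teq_sym[OF teq_one])
next
  case (TAll T)
  then obtain \<gamma> U where U: "is_unit U" "teq T (TSc \<gamma> U)" by auto
  have "teq (TAll T) (TAll (TSc \<gamma> U))" using U by (simp add: teq_All)
  also have "teq (TAll (TSc \<gamma> U)) (TSc \<gamma> (TAll U))"
    using U by (simp add: is_unit_imp_wf_typ teq_all_sc)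
  finally show ?case using U by (intro exI[of _ \<gamma>] exI[of _ "TAll U"]) simp
next
  case (TSc a T)
  then obtain \<gamma> U where U: "is_unit U" "teq T (TSc \<gamma> U)" by auto
  have "teq (TSc a T) (TSc a (TSc \<gamma> U))" using U by (simp add: teq_Sc)
  also have "teq (TSc a (TSc \<gamma> U)) (TSc (a * \<gamma>) U)"
    using U by (simp add: is_unit_imp_wf_typ teq_sc_sc)
  finally show ?case using U by auto
next
  case TZero
  have "teq TZero (TSc 0 (TVar 0 :: 's sty))" by (rule teq_sym, rule teq_zero_sc) simp
  then show ?case by (intro exI[of _ 0] exI[of _ "TVar 0"]) simp
qed

datatype 's nf_unit = NVar nat | NArr "'s nf_unit" "'s nf_typ" | NAll "'s nf_unit"
and 's nf_typ = NZero | NScal 's "'s nf_unit"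

text \<open>Invariant: \<open>NScal\<close> only ever carries a nonzero scalar.\<close>
definition nf_scal :: "'s::comm_ring_1 \<Rightarrow> 's nf_unit \<Rightarrow> 's nf_typ" where
  "nf_scal c u = (if c = 0 then NZero else NScal c u)"

fun nf_scale :: "'s::comm_ring_1 \<Rightarrow> 's nf_typ \<Rightarrow> 's nf_typ" where
  "nf_scale a NZero = NZero"
| "nf_scale a (NScal c u) = nf_scal (a * c) u"

fun nf_all :: "'s nf_typ \<Rightarrow> 's nf_typ" where
  "nf_all NZero = NZero"
| "nf_all (NScal c u) = NScal c (NAll u)"

text \<open>\<open>norm_unit\<close> is only meaningful on unit types; its value on scaled types is junk.\<close>
fun norm_unit :: "'s::comm_ring_1 sty \<Rightarrow> 's nf_unit"
and norm_typ :: "'s::comm_ring_1 sty \<Rightarrow> 's nf_typ" where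
  "norm_unit (TVar n) = NVar n"
| "norm_unit (Arr A B) = NArr (norm_unit A) (norm_typ B)"
| "norm_unit (TAll A) = NAll (norm_unit A)"
| "norm_unit (TSc a A) = NVar 0"
| "norm_unit TZero = NVar 0"
| "norm_typ (TVar n) = nf_scal 1 (NVar n)"
| "norm_typ (Arr A B) = nf_scal 1 (NArr (norm_unit A) (norm_typ B))"
| "norm_typ (TAll A) = nf_all (norm_typ A)"
| "norm_typ (TSc a A) = nf_scale a (norm_typ A)"
| "norm_typ TZero = NZero"

lemma norm_typ_unit: "is_unit A \<Longrightarrow> norm_typ A = nf_scal 1 (norm_unit A)"
  by (induction A) (auto simp: nf_scal_def)

lemma norm_typ_NScal_nonzero: "norm_typ T = NScal c u \<Longrightarrow> c \<noteq> 0"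
proof (induction T arbitrary: c u)
  case (TAll T)
  then show ?case by (cases "norm_typ T") auto
next
  case (TSc a T)
  then show ?case by (cases "norm_typ T") (auto simp: nf_scal_def split: if_splits)
qed (auto simp: nf_scal_def split: if_splits)

lemma nf_scale_nf_scale: "nf_scale a (nf_scale b x) = nf_scale (a * b) x"
  by (cases x) (auto simp: nf_scal_def mult.assoc)

lemma nf_all_nf_scale: "nf_all (nf_scale a x) = nf_scale a (nf_all x)"
  by (cases x) (auto simp: nf_scal_def)

lemma nf_scale_zero: "nf_scale 0 x = NZero"
  by (cases x) (auto simp: nf_scal_def)

lemma teq_imp_norm_typ_eq: "teq A B \<Longrightarrow> norm_typ A = norm_typ B"
proof (induction rule: teq.induct)
  case (teq_one T)
  then show ?case using norm_typ_NScal_nonzero[of T] by (cases "norm_typ T") (auto simp: nf_scal_def)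
next
  case (teq_sc_sc T a b)
  then show ?case by (simp add: nf_scale_nf_scale)
next
  case (teq_all_sc T a)
  then show ?case by (simp add: nf_all_nf_scale)
next
  case (teq_Arr A A' B B')
  show ?case
  proof (cases "(1::'a) = 0")
    case True
    then show ?thesis by (simp add: nf_scal_def)
  next
    case False
    have "nf_scal 1 (norm_unit A) = nf_scal 1 (norm_unit A')"
      using teq_Arr norm_typ_unit by metis
    with False have "norm_unit A = norm_unit A'" by (simp add: nf_scal_def)
    then show ?thesis using teq_Arr by simp
  qed
qed (auto simp: nf_scale_zero)

lemma teq_TSc_units_scalar_eq:
  assumes "is_unit U" "is_unit U'" "teq (TSc a U) (TSc b U')"
  shows "a = b \<or> (a = 0 \<and> b = 0)"
proof -
  have "nf_scal a (norm_unit U) = nf_scal b (norm_unit U')"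
    using teq_imp_norm_typ_eq[OF assms(3)] assms(1,2) by (simp add: norm_typ_unit nf_scal_def)
  then show ?thesis by (auto simp: nf_scal_def split: if_splits)
qed

definition scaled_unit :: "'s::comm_ring_1 \<Rightarrow> 's sty \<Rightarrow> bool" where
  "scaled_unit \<alpha> T \<longleftrightarrow> (\<exists>U \<gamma>. is_unit U \<and> teq T (TSc \<alpha> (TSc \<gamma> U)))"

lemma scaled_unit_teq:
  assumes "scaled_unit \<alpha> T" "teq T S"
  shows "scaled_unit \<alpha> S"
proof -
  obtain U \<gamma> where U: "is_unit U" "teq T (TSc \<alpha> (TSc \<gamma> U))"
    using assms(1) unfolding scaled_unit_def by blast
  have "teq S (TSc \<alpha> (TSc \<gamma> U))" using teq_sym[OF assms(2)] U(2) by (rule teq_trans)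
  then show ?thesis using U(1) unfolding scaled_unit_def by blast
qed

lemma scaled_unit_TSc:
  assumes "wf_typ T"
  shows "scaled_unit \<alpha> (TSc \<alpha> T)"
proof -
  obtain \<gamma> U where "is_unit U" "teq T (TSc \<gamma> U)" using wf_typ_teq_TSc_unit[OF assms] by blast
  then show ?thesis unfolding scaled_unit_def by (blast intro: teq_Sc)
qed

lemma scaled_unit_TAll: "scaled_unit \<alpha> T \<Longrightarrow> scaled_unit \<alpha> (TAll T)"
proof -
  assume "scaled_unit \<alpha> T"
  then obtain U \<gamma> where U: "is_unit U" "teq T (TSc \<alpha> (TSc \<gamma> U))"
    unfolding scaled_unit_def by blast
  have "teq (TAll T) (TAll (TSc \<alpha> (TSc \<gamma> U)))" using U by (simp add: teq_All)
  also have "teq \<dots> (TSc \<alpha> (TAll (TSc \<gamma> U)))"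
    using U by (simp add: is_unit_imp_wf_typ teq_all_sc)
  also have "teq \<dots> (TSc \<alpha> (TSc \<gamma> (TAll U)))"
    using U by (simp add: is_unit_imp_wf_typ teq_all_sc teq_Sc)
  finally show ?thesis using U unfolding scaled_unit_def by (intro exI[of _ "TAll U"]) auto
qed

lemma scaled_unit_subst:
  assumes "scaled_unit \<alpha> T" "is_unit V"
  shows "scaled_unit \<alpha> (subst k V T)"
proof -
  obtain U \<gamma> where U: "is_unit U" "teq T (TSc \<alpha> (TSc \<gamma> U))"
    using assms(1) unfolding scaled_unit_def by blast
  have "teq (subst k V T) (TSc \<alpha> (TSc \<gamma> (subst k V U)))"
    using teq_subst[OF U(2) assms(2)] by simp
  moreover have "is_unit (subst k V U)" using subst_preserves_unit_wf assms(2) U(1) by blast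
  ultimately show ?thesis unfolding scaled_unit_def by blast
qed

lemma scaled_unit_TAll_body: "scaled_unit \<alpha> (TAll T) \<Longrightarrow> scaled_unit \<alpha> T"
proof -
  assume "scaled_unit \<alpha> (TAll T)"
  then obtain U' \<delta> where U': "is_unit U'" "teq (TAll T) (TSc \<alpha> (TSc \<delta> U'))"
    unfolding scaled_unit_def by blast
  then have "wf_typ T" using teq_imp_wf_typ by fastforce
  then obtain \<gamma> U where U: "is_unit U" "teq T (TSc \<gamma> U)" using wf_typ_teq_TSc_unit by blast
  have "teq (TSc \<gamma> (TAll U)) (TAll (TSc \<gamma> U))"
    using U by (simp add: is_unit_imp_wf_typ teq_sym teq_all_sc)
  also have "teq \<dots> (TAll T)" using U by (simp add: teq_sym teq_All)
  also note U'(2)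
  also have "teq (TSc \<alpha> (TSc \<delta> U')) (TSc (\<alpha> * \<delta>) U')"
    using U' by (simp add: is_unit_imp_wf_typ teq_sc_sc)
  finally have "\<gamma> = \<alpha> * \<delta> \<or> \<gamma> = 0"
    using teq_TSc_units_scalar_eq[of "TAll U" U'] U U' by auto
  then obtain \<delta>' where \<delta>': "teq (TSc \<gamma> U) (TSc \<alpha> (TSc \<delta>' U))"
  proof
    assume "\<gamma> = \<alpha> * \<delta>"
    then have "teq (TSc \<gamma> U) (TSc \<alpha> (TSc \<delta> U))"
      using U by (simp add: is_unit_imp_wf_typ teq_sym teq_sc_sc)
    then show ?thesis by (rule that)
  next
    assume "\<gamma> = 0"
    then have "teq (TSc \<gamma> U) TZero" using U by (simp add: is_unit_imp_wf_typ teq_zero_sc)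
    also have "teq TZero (TSc \<alpha> TZero)" by (rule teq_sym, rule teq_sc_zero)
    also have "teq \<dots> (TSc \<alpha> (TSc 0 U))"
      using U by (simp add: is_unit_imp_wf_typ teq_Sc teq_sym teq_zero_sc)
    finally show ?thesis by (rule that)
  qed
  have "teq T (TSc \<alpha> (TSc \<delta>' U))" using U(2) \<delta>' by (rule teq_trans)
  then show ?thesis using U unfolding scaled_unit_def by blast
qed

lemma tac_Scal_iff: "tac s s' \<Longrightarrow> (\<exists>t. s = Scal a t) \<longleftrightarrow> (\<exists>t. s' = Scal a t)"
  by (induction rule: tac.induct) auto

lemma typing_Scal_scaled_unit:
  "typing \<Gamma> s T \<Longrightarrow> \<forall>V\<in>set \<Gamma>. is_unit V \<Longrightarrow> \<exists>t. s = Scal \<alpha> t \<Longrightarrow> scaled_unit \<alpha> T"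
proof (induction rule: typing.induct)
  case (ty_equiv \<Gamma> t T S)
  then show ?case using scaled_unit_teq by blast
next
  case (ty_allE \<Gamma> t T V)
  then show ?case using scaled_unit_TAll_body scaled_unit_subst by blast
next
  case (ty_allI \<Gamma> t T)
  then show ?case by (simp add: scaled_unit_TAll)
next
  case (ty_sI \<Gamma> t T a)
  then have "wf_typ T" "a = \<alpha>" using typing_imp_wf_typ by auto
  then show ?case by (simp add: scaled_unit_TSc)
next
  case (ty_ac \<Gamma> t T t')
  then show ?case using tac_Scal_iff[OF ty_ac(2), of \<alpha>] by simp
qed simp_all

theorem mainTheorem13:
  fixes \<Gamma> :: "'s::comm_ring_1 sty list" and t :: "'s trm" and \<alpha> :: 's and T :: "'s sty"
  assumes "\<forall>V \<in> set \<Gamma>. is_unit V"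
    and "typing \<Gamma> (Scal \<alpha> t) T"
  shows "\<exists>U \<gamma>. is_unit U \<and> teq T (TSc \<alpha> (TSc \<gamma> U))"
  using typing_Scal_scaled_unit[OF assms(2) assms(1)] unfolding scaled_unit_def by blast

end
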